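(* Consider $n$ agents with responsibilities $(b_1,\ldots,b_n)$ and $m$ chores $e_1,\ldots,e_m$. Let $A=(A_1,\ldots,A_n)$ be any allocation, and let $\pi$ be the associated picking sequence in which agent $i$ picks exactly in those rounds $r$ with $e_{m-r+1}\in A_i$. Let $\rho_i(A)$ be the supremum of $c_i(A_i)/APS_i$ over all additive disvaluations $c_i$ with $c_i(e_j)\ge c_i(e_k)$ for all $j<k$. Let $\rho_i(\pi)$ be the supremum, over all additive disvaluations $c_i$ and all disvaluations and picking strategies of the other agents, of $c_i(B_i)/APS_i$, where $B_i$ is the bundle received by agent $i$ following the greedy picking strategy in $\pi$. Then $\rho_i(A)=\rho_i(\pi)$. The same equality holds with $APS_i$ replaced by $CS_i$, and, when all responsibilities equal $1/n$, with $APS_i$ replaced by $MMS_i$.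
   Context: Picking sequence: in round $r$ agent $\pi_r$ takes one remaining chore. Greedy: take remaining chore of smallest own disvalue. $APS_i=\max_p\min\{c_i(S):\sum_{e\in S}p_e\ge b_i\}$ over nonnegative price vectors summing to $1$. $CS_i=\max\{b_ic_i(\mathcal M),d_1,d_k+d_{k+1}\}$, $k=\lfloor 1/b_i\rfloor$, $d_1\ge d_2\ge\cdots$ the disvalues under $c_i$ sorted non-increasingly (padded with zeros). $MMS_i=\min_{(A_1,\ldots,A_n)}\max_jc_i(A_j)$ over partitions of the chores into $n$ bundles. *)

theory Defs
  imports Complex_Main "HOL-Library.FuncSet" "HOL-Library.Extended_Real"
begin

text \<open>Agents are 1..n, chores are e_1..e_m, represented by the numbers 1..m.
  A disvaluation is an additive function given by its values c e (e in 1..m), c e >= 0.\<close>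

definition disvaluation :: "nat \<Rightarrow> (nat \<Rightarrow> real) \<Rightarrow> bool" where
  "disvaluation m c \<longleftrightarrow> (\<forall>e\<in>{1..m}. 0 \<le> c e)"

definition aps :: "real \<Rightarrow> nat \<Rightarrow> (nat \<Rightarrow> real) \<Rightarrow> real" where
  "aps b m c = (SUP p \<in> {p. (\<forall>e\<in>{1..m}. 0 \<le> p e) \<and> sum p {1..m} = 1}.
                  Min {sum c S | S. S \<subseteq> {1..m} \<and> b \<le> sum p S})"

definition dsorted :: "nat \<Rightarrow> (nat \<Rightarrow> real) \<Rightarrow> nat \<Rightarrow> real" where
  "dsorted m c j = (let ds = rev (sort (map c [1..<m+1])) in
                     if 1 \<le> j \<and> j \<le> length ds then ds ! (j - 1) else 0)"

definition cs :: "real \<Rightarrow> nat \<Rightarrow> (nat \<Rightarrow> real) \<Rightarrow> real" where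
  "cs b m c = (let k = nat \<lfloor>1 / b\<rfloor> in
     max (b * sum c {1..m}) (max (dsorted m c 1) (dsorted m c k + dsorted m c (k + 1))))"

text \<open>Maximin share: min over partitions of the chores into n bundles (functions
  from chores to agents) of the maximum picked_bundle cost.\<close>
definition mms :: "nat \<Rightarrow> nat \<Rightarrow> (nat \<Rightarrow> real) \<Rightarrow> real" where
  "mms n m c = Min ((\<lambda>f. Max ((\<lambda>j. sum c {e\<in>{1..m}. f e = j}) ` {1..n}))
                      ` ({1..m} \<rightarrow>\<^sub>E {1..n}))"

definition rho_alloc :: "((nat \<Rightarrow> real) \<Rightarrow> real) \<Rightarrow> (nat \<Rightarrow> nat set) \<Rightarrow> nat \<Rightarrow> nat \<Rightarrow> ereal" where
  "rho_alloc share A i m =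
     (SUP c \<in> {c. disvaluation m c \<and> (\<forall>j k. 1 \<le> j \<longrightarrow> j < k \<longrightarrow> k \<le> m \<longrightarrow> c k \<le> c j)}.
        ereal (sum c (A i) / share c))"

text \<open>A picking strategy maps the history (list of chores picked so far) to a
  remaining chore.\<close>
definition valid_strategy :: "nat \<Rightarrow> (nat list \<Rightarrow> nat) \<Rightarrow> bool" where
  "valid_strategy m s \<longleftrightarrow>
     (\<forall>h. distinct h \<and> set h \<subseteq> {1..m} \<and> length h < m \<longrightarrow> s h \<in> {1..m} - set h)"

definition greedy_strategy :: "nat \<Rightarrow> (nat \<Rightarrow> real) \<Rightarrow> (nat list \<Rightarrow> nat) \<Rightarrow> bool" where
  "greedy_strategy m c s \<longleftrightarrow> valid_strategy m s \<and>
     (\<forall>h. distinct h \<and> set h \<subseteq> {1..m} \<and> length h < m \<longrightarrow>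
          (\<forall>e\<in>{1..m} - set h. c (s h) \<le> c e))"

text \<open>History after r rounds: in round r agent seq r picks.\<close>
fun history :: "(nat \<Rightarrow> nat) \<Rightarrow> (nat \<Rightarrow> nat list \<Rightarrow> nat) \<Rightarrow> nat \<Rightarrow> nat list" where
  "history seq \<sigma> 0 = []"
| "history seq \<sigma> (Suc r) = history seq \<sigma> r @ [\<sigma> (seq (Suc r)) (history seq \<sigma> r)]"

definition picked_bundle :: "(nat \<Rightarrow> nat) \<Rightarrow> (nat \<Rightarrow> nat list \<Rightarrow> nat) \<Rightarrow> nat \<Rightarrow> nat \<Rightarrow> nat set" where
  "picked_bundle seq \<sigma> m i = {history seq \<sigma> m ! (r - 1) | r. r \<in> {1..m} \<and> seq r = i}"

definition rho_pi :: "((nat \<Rightarrow> real) \<Rightarrow> real) \<Rightarrow> (nat \<Rightarrow> nat) \<Rightarrow> nat \<Rightarrow> nat \<Rightarrow> nat \<Rightarrow> ereal" where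
  "rho_pi share seq i m n =
     (SUP (c, \<sigma>) \<in> {(c, \<sigma>). disvaluation m c \<and> greedy_strategy m c (\<sigma> i) \<and>
                        (\<forall>j\<in>{1..n}. valid_strategy m (\<sigma> j))}.
        ereal (sum c (picked_bundle seq \<sigma> m i) / share c))"

end

theory Submission
  imports Defs "HOL-Combinatorics.Permutations"
begin

(* If c is non-increasing along e_1, ..., e_m and every agent always takes the remaining chore
   of largest index, the picking sequence hands agent i exactly A_i, and this behaviour is
   greedy for c; hence rho_i(A) <= rho_i(pi).  Conversely, relabel the chores by a permutation
   tau making c o tau non-increasing; APS, CS and MMS are invariant under relabelling.  In a
   round r in which agent i picks, only r - 1 chores are gone, so one of the r cheapest chores
   is still available and the greedy pick costs at most (c o tau)(e_{m+1-r}).  Summing over the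
   rounds of agent i gives c(B_i) <= (c o tau)(A_i), hence rho_i(pi) <= rho_i(A). *)

lemma length_history [simp]: "length (history seq \<sigma> k) = k"
  by (induction k) auto

lemma nth_history: "j < k \<Longrightarrow> history seq \<sigma> k ! j = \<sigma> (seq (Suc j)) (history seq \<sigma> j)"
  by (induction k) (auto simp: nth_append less_Suc_eq)

lemma history_distinct_subset:
  assumes "\<And>r. r \<in> {1..k} \<Longrightarrow> valid_strategy m (\<sigma> (seq r))" and "k \<le> m"
  shows "distinct (history seq \<sigma> k) \<and> set (history seq \<sigma> k) \<subseteq> {1..m}"
  using assms
proof (induction k)
  case (Suc k)
  then have "distinct (history seq \<sigma> k) \<and> set (history seq \<sigma> k) \<subseteq> {1..m}"
    by auto
  moreover have "valid_strategy m (\<sigma> (seq (Suc k)))"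
    using Suc.prems by auto
  ultimately show ?case
    using Suc.prems(2) by (auto simp: valid_strategy_def)
qed simp

lemma picked_bundle_eq_image:
  "picked_bundle seq \<sigma> m i = (\<lambda>r. history seq \<sigma> m ! (r - 1)) ` {r \<in> {1..m}. seq r = i}"
  unfolding picked_bundle_def by auto

lemma antimono_on_atLeastAtMost_iff:
  "(\<forall>j k. 1 \<le> j \<longrightarrow> j < k \<longrightarrow> k \<le> m \<longrightarrow> c k \<le> c j) \<longleftrightarrow> antimono_on {1..m} (c :: nat \<Rightarrow> real)"
proof
  assume "\<forall>j k. 1 \<le> j \<longrightarrow> j < k \<longrightarrow> k \<le> m \<longrightarrow> c k \<le> c j"
  then show "antimono_on {1..m} c"
    by (intro monotone_onI) (auto simp: le_less)
qed (auto intro: monotone_onD)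

definition pick_last :: "nat \<Rightarrow> nat list \<Rightarrow> nat" where
  "pick_last m h = Max ({1..m} - set h)"

lemma valid_strategy_pick_last: "valid_strategy m (pick_last m)"
  unfolding valid_strategy_def pick_last_def
proof (intro allI impI)
  fix h :: "nat list"
  assume h: "distinct h \<and> set h \<subseteq> {1..m} \<and> length h < m"
  then have "card (set h) < card {1..m}"
    by (simp add: distinct_card)
  then have "{1..m} - set h \<noteq> {}"
    using card_mono[of "set h" "{1..m}"] by auto
  then show "Max ({1..m} - set h) \<in> {1..m} - set h"
    by (intro Max_in) auto
qed

lemma greedy_strategy_pick_last:
  assumes "antimono_on {1..m} c"
  shows "greedy_strategy m c (pick_last m)"
  unfolding greedy_strategy_def
proof (intro conjI allI impI ballI valid_strategy_pick_last)
  fix h e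
  assume "distinct h \<and> set h \<subseteq> {1..m} \<and> length h < m" and e: "e \<in> {1..m} - set h"
  then have "pick_last m h \<in> {1..m} - set h"
    using valid_strategy_pick_last unfolding valid_strategy_def by blast
  moreover have "e \<le> pick_last m h"
    unfolding pick_last_def using e by (intro Max_ge) auto
  ultimately show "c (pick_last m h) \<le> c e"
    using assms e by (auto intro: monotone_onD)
qed

lemma history_pick_last:
  "k \<le> m \<Longrightarrow> history seq (\<lambda>_. pick_last m) k = map (\<lambda>j. m - j) [0..<k]"
proof (induction k)
  case (Suc k)
  have "pick_last m (map (\<lambda>j. m - j) [0..<k]) = m - k"
    unfolding pick_last_def
  proof (rule Max_eqI)
    fix y
    assume "y \<in> {1..m} - set (map (\<lambda>j. m - j) [0..<k])"
    then have y: "y \<in> {1..m}" "\<forall>j<k. y \<noteq> m - j"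
      by auto
    show "y \<le> m - k"
    proof (rule ccontr)
      assume "\<not> y \<le> m - k"
      then have "m - y < k" "y = m - (m - y)"
        using y(1) by auto
      then show False
        using y(2) by blast
    qed
  qed (use Suc.prems in auto)
  then show ?case
    using Suc by simp
qed simp

lemma picked_bundle_pick_last:
  "picked_bundle seq (\<lambda>_. pick_last m) m i = (\<lambda>r. m + 1 - r) ` {r \<in> {1..m}. seq r = i}"
  unfolding picked_bundle_eq_image
  by (intro image_cong) (auto simp: history_pick_last)

lemma bundle_eq_reversed_rounds:
  fixes m :: nat and seq :: "nat \<Rightarrow> nat"
  assumes "A \<subseteq> {1..m}" and "\<forall>r\<in>{1..m}. seq r = i \<longleftrightarrow> m + 1 - r \<in> A"
  shows "A = (\<lambda>r. m + 1 - r) ` {r \<in> {1..m}. seq r = i}"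
proof (intro equalityI subsetI)
  fix x
  assume x: "x \<in> A"
  then have "x \<in> {1..m}"
    using assms(1) by blast
  then have "x = m + 1 - (m + 1 - x)" "m + 1 - x \<in> {1..m}"
    by auto
  then show "x \<in> (\<lambda>r. m + 1 - r) ` {r \<in> {1..m}. seq r = i}"
    using assms(2) x by (metis (mono_tags, lifting) image_eqI mem_Collect_eq)
qed (use assms(2) in auto)

lemma picking_sequence_range:
  fixes m :: nat and seq :: "nat \<Rightarrow> nat"
  assumes "(\<Union>j\<in>{1..n}. A j) = {1..m}" and "\<forall>r\<in>{1..m}. \<forall>j\<in>{1..n}. seq r = j \<longleftrightarrow> m + 1 - r \<in> A j"
  shows "seq ` {1..m} \<subseteq> {1..n}"
proof
  fix x
  assume "x \<in> seq ` {1..m}"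
  then obtain r where r: "r \<in> {1..m}" "x = seq r"
    by blast
  then have "m + 1 - r \<in> {1..m}"
    by auto
  then obtain j where j: "j \<in> {1..n}" "m + 1 - r \<in> A j"
    using assms(1) by blast
  then have "seq r = j"
    using assms(2) r(1) by simp
  then show "x \<in> {1..n}"
    using j(1) r(2) by simp
qed

lemma sorting_permutation:
  fixes c :: "nat \<Rightarrow> real"
  obtains \<tau> where "\<tau> permutes {1..m}" and "antimono_on {1..m} (c \<circ> \<tau>)"
proof -
  define xs where "xs = sort_key (\<lambda>e. - c e) [1..<m+1]"
  have xs: "distinct xs" "length xs = m" "set xs = {1..m}" "sorted (map (\<lambda>e. - c e) xs)"
    unfolding xs_def by auto
  define \<tau> where "\<tau> j = (if j \<in> {1..m} then xs ! (j - 1) else j)" for j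
  have "bij_betw ((!) xs \<circ> (\<lambda>j. j - 1)) {1..m} {1..m}"
  proof (rule bij_betw_trans)
    show "bij_betw (\<lambda>j. j - 1) {1..m} {..<m}"
      by (rule bij_betw_byWitness[where f' = Suc]) auto
    show "bij_betw ((!) xs) {..<m} {1..m}"
      using bij_betw_nth[OF xs(1)] xs(2,3) by simp
  qed
  then have "bij_betw \<tau> {1..m} {1..m}"
    by (rule bij_betw_cong[THEN iffD1, rotated]) (simp add: \<tau>_def)
  then have "\<tau> permutes {1..m}"
    by (rule bij_imp_permutes) (auto simp: \<tau>_def)
  moreover have "antimono_on {1..m} (c \<circ> \<tau>)"
  proof (rule monotone_onI)
    fix j k :: nat
    assume jk: "j \<in> {1..m}" "k \<in> {1..m}" "j \<le> k"
    then have "- c (xs ! (j - 1)) \<le> - c (xs ! (k - 1))"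
      using sorted_nth_mono[OF xs(4), of "j - 1" "k - 1"] xs(2) by auto
    then show "(c \<circ> \<tau>) k \<le> (c \<circ> \<tau>) j"
      using jk by (simp add: \<tau>_def)
  qed
  ultimately show ?thesis
    using that by blast
qed

lemma greedy_choice_le:
  assumes greedy: "greedy_strategy m c s"
    and h: "distinct h" "set h \<subseteq> {1..m}" "length h < m"
    and \<tau>: "\<tau> permutes {1..m}" "antimono_on {1..m} (c \<circ> \<tau>)"
  shows "c (s h) \<le> c (\<tau> (m - length h))"
proof -
  \<comment> \<open>\<open>\<tau> ` ?K\<close> are the \<open>length h + 1\<close> cheapest chores; not all of them can be taken.\<close>
  let ?K = "{m - length h..m}"
  have "card (\<tau> ` ?K) = card (set h) + 1"
    using h(1,3) permutes_inj_on[OF \<tau>(1)] by (simp add: card_image distinct_card)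
  then have "\<not> \<tau> ` ?K \<subseteq> set h"
    using card_mono[of "set h" "\<tau> ` ?K"] by auto
  then obtain k where k: "k \<in> ?K" "\<tau> k \<notin> set h"
    by blast
  have "k \<in> {1..m}"
    using k(1) h(3) by auto
  then have "\<tau> k \<in> {1..m} - set h"
    using k(2) permutes_in_image[OF \<tau>(1)] by auto
  then have "c (s h) \<le> c (\<tau> k)"
    using greedy h unfolding greedy_strategy_def by blast
  also have "\<dots> \<le> c (\<tau> (m - length h))"
    using monotone_onD[OF \<tau>(2)] k(1) h(3) \<open>k \<in> {1..m}\<close> by fastforce
  finally show ?thesis .
qed

lemma greedy_picked_bundle_le:
  assumes valid: "\<forall>r\<in>{1..m}. valid_strategy m (\<sigma> (seq r))"
    and greedy: "greedy_strategy m c (\<sigma> i)" and "disvaluation m c"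
    and \<tau>: "\<tau> permutes {1..m}" "antimono_on {1..m} (c \<circ> \<tau>)"
  shows "sum c (picked_bundle seq \<sigma> m i) \<le> sum (c \<circ> \<tau>) ((\<lambda>r. m + 1 - r) ` {r \<in> {1..m}. seq r = i})"
proof -
  define R where "R = {r \<in> {1..m}. seq r = i}"
  define H where "H = history seq \<sigma> m"
  have H_set: "set H \<subseteq> {1..m}"
    unfolding H_def using valid by (intro history_distinct_subset[THEN conjunct2]) auto
  have H_in: "H ! (r - 1) \<in> {1..m}" if "r \<in> {1..m}" for r
  proof -
    have "r - 1 < length H"
      using that by (auto simp: H_def)
    then show ?thesis
      using H_set nth_mem by blast
  qed
  have pick: "c (H ! (r - 1)) \<le> c (\<tau> (m + 1 - r))" if "r \<in> R" for r
  proof -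
    have r: "r \<in> {1..m}" "seq r = i"
      using that unfolding R_def by auto
    let ?h = "history seq \<sigma> (r - 1)"
    have "H ! (r - 1) = \<sigma> (seq (Suc (r - 1))) ?h"
      unfolding H_def using r(1) by (intro nth_history) auto
    then have "H ! (r - 1) = \<sigma> i ?h"
      using r by simp
    moreover have "distinct ?h \<and> set ?h \<subseteq> {1..m}"
      using r(1) valid by (intro history_distinct_subset) auto
    ultimately show ?thesis
      using greedy_choice_le[OF greedy _ _ _ \<tau>, of ?h] r(1) by auto
  qed
  have "sum c (picked_bundle seq \<sigma> m i) \<le> sum (c \<circ> (\<lambda>r. H ! (r - 1))) R"
    unfolding picked_bundle_eq_image R_def[symmetric] H_def[symmetric]
    using \<open>disvaluation m c\<close> H_in unfolding disvaluation_def R_def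
    by (intro sum_image_le) auto
  also have "\<dots> \<le> (\<Sum>r\<in>R. c (\<tau> (m + 1 - r)))"
    using pick by (intro sum_mono) simp
  also have "\<dots> = sum (c \<circ> \<tau>) ((\<lambda>r. m + 1 - r) ` R)"
    by (subst sum.reindex) (auto simp: R_def inj_on_def)
  finally show ?thesis
    unfolding R_def .
qed

definition perm_invariant :: "nat \<Rightarrow> ((nat \<Rightarrow> real) \<Rightarrow> real) \<Rightarrow> bool" where
  "perm_invariant m s \<longleftrightarrow> (\<forall>c \<tau>. \<tau> permutes {1..m} \<longrightarrow> s (c \<circ> \<tau>) = s c)"

lemma perm_invariantI:
  assumes le: "\<And>c \<tau>. \<tau> permutes {1..m} \<Longrightarrow> s (c \<circ> \<tau>) \<le> s c"
  shows "perm_invariant m s"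
  unfolding perm_invariant_def
proof (intro allI impI antisym le)
  fix c and \<tau> :: "nat \<Rightarrow> nat"
  assume \<tau>: "\<tau> permutes {1..m}"
  have "s c = s ((c \<circ> \<tau>) \<circ> inv \<tau>)"
    by (simp add: comp_assoc permutes_inv_o[OF \<tau>])
  also have "\<dots> \<le> s (c \<circ> \<tau>)"
    by (rule le[OF permutes_inv[OF \<tau>]])
  finally show "s c \<le> s (c \<circ> \<tau>)" .
qed

lemma sum_comp_permutes_image:
  assumes "\<tau> permutes S"
  shows "sum (g \<circ> \<tau>) T = sum g (\<tau> ` T)"
  using sum.reindex[OF permutes_inj_on[OF assms], of g] by simp

lemma dsorted_permute:
  assumes "\<tau> permutes {1..m}"
  shows "dsorted m (c \<circ> \<tau>) = dsorted m c"
proof -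
  have "{1..<m+1} = {1..m}"
    by auto
  then have "mset [1..<m+1] = mset_set {1..m}"
    by (simp only: mset_upt)
  then have "mset (map (c \<circ> \<tau>) [1..<m+1]) = mset (map c [1..<m+1])"
    by (simp only: mset_map multiset.map_comp[symmetric] permutes_image_mset[OF assms])
  then have "sort (map (c \<circ> \<tau>) [1..<m+1]) = sort (map c [1..<m+1])"
    by (intro properties_for_sort) auto
  then show ?thesis
    unfolding dsorted_def by (simp only: length_rev length_sort)
qed

lemma perm_invariant_cs: "perm_invariant m (cs b m)"
  unfolding perm_invariant_def
proof (intro allI impI)
  fix c :: "nat \<Rightarrow> real" and \<tau> :: "nat \<Rightarrow> nat"
  assume \<tau>: "\<tau> permutes {1..m}"
  then have "sum (c \<circ> \<tau>) {1..m} = sum c {1..m}"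
    by (rule sum.permute[symmetric])
  then show "cs b m (c \<circ> \<tau>) = cs b m c"
    unfolding cs_def dsorted_permute[OF \<tau>] by simp
qed

lemma cs_nonneg:
  assumes "0 \<le> b" and "disvaluation m c"
  shows "0 \<le> cs b m c"
proof -
  have "0 \<le> b * sum c {1..m}"
    using assms unfolding disvaluation_def by (intro mult_nonneg_nonneg sum_nonneg) auto
  then show ?thesis
    unfolding cs_def Let_def by linarith
qed

definition price_vectors :: "nat \<Rightarrow> (nat \<Rightarrow> real) set" where
  "price_vectors m = {p. (\<forall>e\<in>{1..m}. 0 \<le> p e) \<and> sum p {1..m} = 1}"

definition affordable_costs :: "real \<Rightarrow> nat \<Rightarrow> (nat \<Rightarrow> real) \<Rightarrow> (nat \<Rightarrow> real) \<Rightarrow> real set" where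
  "affordable_costs b m c p = {sum c S | S. S \<subseteq> {1..m} \<and> b \<le> sum p S}"

lemma aps_eq_SUP: "aps b m c = (SUP p \<in> price_vectors m. Min (affordable_costs b m c p))"
  unfolding aps_def price_vectors_def affordable_costs_def ..

lemma finite_affordable_costs: "finite (affordable_costs b m c p)"
proof (rule finite_subset)
  show "affordable_costs b m c p \<subseteq> sum c ` Pow {1..m}"
    unfolding affordable_costs_def by auto
qed simp

lemma total_cost_in_affordable_costs:
  assumes "b \<le> 1" and "p \<in> price_vectors m"
  shows "sum c {1..m} \<in> affordable_costs b m c p"
  using assms unfolding affordable_costs_def price_vectors_def by auto

lemma bdd_above_Min_affordable_costs:
  "b \<le> 1 \<Longrightarrow> bdd_above ((\<lambda>p. Min (affordable_costs b m c p)) ` price_vectors m)"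
  by (rule bdd_aboveI2[where M = "sum c {1..m}"])
    (rule Min_le[OF finite_affordable_costs total_cost_in_affordable_costs])

lemma affordable_costs_permute:
  assumes \<tau>: "\<tau> permutes {1..m}"
  shows "affordable_costs b m (c \<circ> \<tau>) (p \<circ> \<tau>) = affordable_costs b m c p"
proof -
  have sub: "affordable_costs b m (c \<circ> \<sigma>) (p \<circ> \<sigma>) \<subseteq> affordable_costs b m c p"
    if \<sigma>: "\<sigma> permutes {1..m}" for c p \<sigma>
  proof
    fix x
    assume "x \<in> affordable_costs b m (c \<circ> \<sigma>) (p \<circ> \<sigma>)"
    then obtain T where T: "T \<subseteq> {1..m}" "b \<le> sum p (\<sigma> ` T)" "x = sum c (\<sigma> ` T)"
      unfolding affordable_costs_def sum_comp_permutes_image[OF \<sigma>] by blast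
    moreover have "\<sigma> ` T \<subseteq> {1..m}"
      using image_mono[OF T(1), of \<sigma>] permutes_image[OF \<sigma>] by simp
    ultimately show "x \<in> affordable_costs b m c p"
      unfolding affordable_costs_def by blast
  qed
  have "affordable_costs b m c p = affordable_costs b m ((c \<circ> \<tau>) \<circ> inv \<tau>) ((p \<circ> \<tau>) \<circ> inv \<tau>)"
    by (simp add: comp_assoc permutes_inv_o[OF \<tau>])
  also have "\<dots> \<subseteq> affordable_costs b m (c \<circ> \<tau>) (p \<circ> \<tau>)"
    by (rule sub[OF permutes_inv[OF \<tau>]])
  finally show ?thesis
    using sub[OF \<tau>] by blast
qed

lemma price_vectors_permute:
  assumes \<tau>: "\<tau> permutes {1..m}"
  shows "(\<lambda>p. p \<circ> \<tau>) ` price_vectors m = price_vectors m"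
proof -
  have sub: "(\<lambda>p. p \<circ> \<sigma>) ` price_vectors m \<subseteq> price_vectors m" if \<sigma>: "\<sigma> permutes {1..m}" for \<sigma>
  proof
    fix q
    assume "q \<in> (\<lambda>p. p \<circ> \<sigma>) ` price_vectors m"
    then obtain p where p: "p \<in> price_vectors m" "q = p \<circ> \<sigma>"
      by blast
    moreover have "sum (p \<circ> \<sigma>) {1..m} = sum p {1..m}"
      by (rule sum.permute[OF \<sigma>, symmetric])
    ultimately show "q \<in> price_vectors m"
      using permutes_in_image[OF \<sigma>] unfolding price_vectors_def by auto
  qed
  have "price_vectors m = (\<lambda>p. p \<circ> \<tau>) ` ((\<lambda>p. p \<circ> inv \<tau>) ` price_vectors m)"
    by (simp add: image_comp comp_assoc permutes_inv_o[OF \<tau>])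
  also have "\<dots> \<subseteq> (\<lambda>p. p \<circ> \<tau>) ` price_vectors m"
    using sub[OF permutes_inv[OF \<tau>]] by (rule image_mono)
  finally show ?thesis
    using sub[OF \<tau>] by blast
qed

lemma perm_invariant_aps: "perm_invariant m (aps b m)"
  unfolding perm_invariant_def
proof (intro allI impI)
  fix c :: "nat \<Rightarrow> real" and \<tau> :: "nat \<Rightarrow> nat"
  assume \<tau>: "\<tau> permutes {1..m}"
  have "aps b m (c \<circ> \<tau>) = (SUP p \<in> (\<lambda>p. p \<circ> \<tau>) ` price_vectors m. Min (affordable_costs b m (c \<circ> \<tau>) p))"
    unfolding aps_eq_SUP price_vectors_permute[OF \<tau>] ..
  also have "\<dots> = aps b m c"
    unfolding aps_eq_SUP image_comp by (simp add: comp_def affordable_costs_permute[OF \<tau>, unfolded comp_def])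
  finally show "aps b m (c \<circ> \<tau>) = aps b m c" .
qed

lemma aps_nonneg:
  assumes "b \<le> 1" and "0 < m" and "disvaluation m c"
  shows "0 \<le> aps b m c"
proof -
  have uniform: "(\<lambda>_. 1 / real m) \<in> price_vectors m"
    using \<open>0 < m\<close> unfolding price_vectors_def by auto
  have "affordable_costs b m c (\<lambda>_. 1 / real m) \<noteq> {}"
    using total_cost_in_affordable_costs[OF \<open>b \<le> 1\<close> uniform] by blast
  moreover have "\<forall>x \<in> affordable_costs b m c (\<lambda>_. 1 / real m). 0 \<le> x"
    using \<open>disvaluation m c\<close> unfolding affordable_costs_def disvaluation_def
    by (fastforce intro!: sum_nonneg)
  ultimately have "0 \<le> Min (affordable_costs b m c (\<lambda>_. 1 / real m))"
    by (simp add: finite_affordable_costs)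
  also have "\<dots> \<le> aps b m c"
    unfolding aps_eq_SUP
    by (rule cSUP_upper[OF uniform bdd_above_Min_affordable_costs[OF \<open>b \<le> 1\<close>]])
  finally show ?thesis .
qed

definition max_bundle_cost :: "nat \<Rightarrow> nat \<Rightarrow> (nat \<Rightarrow> real) \<Rightarrow> (nat \<Rightarrow> nat) \<Rightarrow> real" where
  "max_bundle_cost n m c f = Max ((\<lambda>j. sum c {e \<in> {1..m}. f e = j}) ` {1..n})"

lemma mms_eq_Min: "mms n m c = Min (max_bundle_cost n m c ` ({1..m} \<rightarrow>\<^sub>E {1..n}))"
  unfolding mms_def max_bundle_cost_def ..

lemma max_bundle_cost_permute:
  assumes \<tau>: "\<tau> permutes {1..m}"
  shows "max_bundle_cost n m (c \<circ> \<tau>) (restrict (f \<circ> \<tau>) {1..m}) = max_bundle_cost n m c f"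
proof -
  have img: "\<tau> ` {e \<in> {1..m}. f (\<tau> e) = j} = {e \<in> {1..m}. f e = j}" for j
    using permutes_in_image[OF \<tau>] permutes_inverses[OF \<tau>] by (auto simp: image_iff) (metis)
  have restr: "{e \<in> {1..m}. restrict (f \<circ> \<tau>) {1..m} e = j} = {e \<in> {1..m}. f (\<tau> e) = j}" for j
    by auto
  have "sum (c \<circ> \<tau>) {e \<in> {1..m}. restrict (f \<circ> \<tau>) {1..m} e = j} = sum c {e \<in> {1..m}. f e = j}" for j
    by (simp only: restr sum_comp_permutes_image[OF \<tau>] img)
  then show ?thesis
    unfolding max_bundle_cost_def by simp
qed

lemma perm_invariant_mms: "perm_invariant m (mms n m)"
proof (rule perm_invariantI)
  fix c and \<tau> :: "nat \<Rightarrow> nat"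
  assume \<tau>: "\<tau> permutes {1..m}"
  let ?F = "{1..m} \<rightarrow>\<^sub>E {1..n}"
  show "mms n m (c \<circ> \<tau>) \<le> mms n m c"
  proof (cases "?F = {}")
    case False
    have "finite ?F"
      by (simp add: finite_PiE)
    then have "mms n m c \<in> max_bundle_cost n m c ` ?F"
      unfolding mms_eq_Min using False by (intro Min_in) auto
    then obtain f where f: "f \<in> ?F" "mms n m c = max_bundle_cost n m c f"
      by blast
    have "restrict (f \<circ> \<tau>) {1..m} \<in> ?F"
      using f(1) permutes_in_image[OF \<tau>] by auto
    then have "mms n m (c \<circ> \<tau>) \<le> max_bundle_cost n m (c \<circ> \<tau>) (restrict (f \<circ> \<tau>) {1..m})"
      unfolding mms_eq_Min using \<open>finite ?F\<close> by (intro Min_le) auto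
    then show ?thesis
      using f(2) max_bundle_cost_permute[OF \<tau>] by simp
  qed (simp add: mms_eq_Min)
qed

lemma mms_nonneg:
  assumes "1 \<le> n" and "disvaluation m c"
  shows "0 \<le> mms n m c"
proof -
  let ?F = "{1..m} \<rightarrow>\<^sub>E {1..n}"
  have "(\<lambda>e \<in> {1..m}. 1) \<in> ?F"
    using \<open>1 \<le> n\<close> by auto
  then have "?F \<noteq> {}"
    by blast
  moreover have "finite ?F"
    by (simp add: finite_PiE)
  moreover have "0 \<le> max_bundle_cost n m c f" for f
  proof -
    have "0 \<le> sum c {e \<in> {1..m}. f e = 1}"
      using \<open>disvaluation m c\<close> unfolding disvaluation_def by (intro sum_nonneg) auto
    also have "\<dots> \<le> max_bundle_cost n m c f"
      unfolding max_bundle_cost_def using \<open>1 \<le> n\<close> by (intro Max_ge) auto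
    finally show ?thesis .
  qed
  ultimately show ?thesis
    unfolding mms_eq_Min by (subst Min_ge_iff) auto
qed

lemma rho_alloc_le_rho_pi:
  assumes "A i = (\<lambda>r. m + 1 - r) ` {r \<in> {1..m}. seq r = i}"
  shows "rho_alloc s A i m \<le> rho_pi s seq i m n"
  unfolding rho_alloc_def rho_pi_def
proof (rule SUP_mono)
  fix c
  assume "c \<in> {c. disvaluation m c \<and> (\<forall>j k. 1 \<le> j \<longrightarrow> j < k \<longrightarrow> k \<le> m \<longrightarrow> c k \<le> c j)}"
  then have "disvaluation m c" and "antimono_on {1..m} c"
    by (simp_all only: mem_Collect_eq antimono_on_atLeastAtMost_iff)
  moreover have "picked_bundle seq (\<lambda>_. pick_last m) m i = A i"
    unfolding assms by (rule picked_bundle_pick_last)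
  ultimately show "\<exists>p \<in> {(c, \<sigma>). disvaluation m c \<and> greedy_strategy m c (\<sigma> i) \<and> (\<forall>j\<in>{1..n}. valid_strategy m (\<sigma> j))}.
      ereal (sum c (A i) / s c) \<le> (case p of (c, \<sigma>) \<Rightarrow> ereal (sum c (picked_bundle seq \<sigma> m i) / s c))"
    by (intro bexI[of _ "(c, \<lambda>_. pick_last m)"])
      (auto simp: greedy_strategy_pick_last valid_strategy_pick_last)
qed

lemma rho_pi_le_rho_alloc:
  assumes "perm_invariant m s" and s_nonneg: "\<And>c. 0 < m \<Longrightarrow> disvaluation m c \<Longrightarrow> 0 \<le> s c"
    and "seq ` {1..m} \<subseteq> {1..n}" and A_i: "A i = (\<lambda>r. m + 1 - r) ` {r \<in> {1..m}. seq r = i}"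
  shows "rho_pi s seq i m n \<le> rho_alloc s A i m"
  unfolding rho_alloc_def rho_pi_def
proof (rule SUP_mono)
  fix p
  assume "p \<in> {(c, \<sigma>). disvaluation m c \<and> greedy_strategy m c (\<sigma> i) \<and> (\<forall>j\<in>{1..n}. valid_strategy m (\<sigma> j))}"
  then obtain c \<sigma> where p: "p = (c, \<sigma>)" and c: "disvaluation m c" and greedy: "greedy_strategy m c (\<sigma> i)"
    and valid: "\<forall>j\<in>{1..n}. valid_strategy m (\<sigma> j)"
    by blast
  obtain \<tau> where \<tau>: "\<tau> permutes {1..m}" "antimono_on {1..m} (c \<circ> \<tau>)"
    using sorting_permutation by blast
  have "disvaluation m (c \<circ> \<tau>)"
    using c permutes_in_image[OF \<tau>(1)] unfolding disvaluation_def by simp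
  moreover have "sum c (picked_bundle seq \<sigma> m i) / s c \<le> sum (c \<circ> \<tau>) (A i) / s (c \<circ> \<tau>)"
  proof (cases "m = 0")
    case True
    then show ?thesis
      using A_i by (simp add: picked_bundle_def)
  next
    case False
    have "sum c (picked_bundle seq \<sigma> m i) \<le> sum (c \<circ> \<tau>) (A i)"
      unfolding A_i
      by (rule greedy_picked_bundle_le) (use valid \<open>seq ` {1..m} \<subseteq> {1..n}\<close> greedy c \<tau> in auto)
    moreover have "s (c \<circ> \<tau>) = s c"
      using \<open>perm_invariant m s\<close> \<tau>(1) unfolding perm_invariant_def by blast
    ultimately show ?thesis
      using s_nonneg[OF _ c] False by (simp add: divide_right_mono)
  qed
  ultimately show "\<exists>c' \<in> {c. disvaluation m c \<and> (\<forall>j k. 1 \<le> j \<longrightarrow> j < k \<longrightarrow> k \<le> m \<longrightarrow> c k \<le> c j)}.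
      (case p of (c, \<sigma>) \<Rightarrow> ereal (sum c (picked_bundle seq \<sigma> m i) / s c)) \<le> ereal (sum c' (A i) / s c')"
    using \<tau>(2) p unfolding mem_Collect_eq antimono_on_atLeastAtMost_iff
    by (intro bexI[of _ "c \<circ> \<tau>"]) auto
qed

(* For m = 0 no sign can be assumed: the APS is then a supremum over the empty set. *)
lemma rho_alloc_eq_rho_pi:
  assumes "perm_invariant m s" and "\<And>c. 0 < m \<Longrightarrow> disvaluation m c \<Longrightarrow> 0 \<le> s c"
    and "seq ` {1..m} \<subseteq> {1..n}" and "A i = (\<lambda>r. m + 1 - r) ` {r \<in> {1..m}. seq r = i}"
  shows "rho_alloc s A i m = rho_pi s seq i m n"
proof (rule antisym)
  show "rho_alloc s A i m \<le> rho_pi s seq i m n"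
    using assms(4) by (rule rho_alloc_le_rho_pi)
  show "rho_pi s seq i m n \<le> rho_alloc s A i m"
    using assms by (rule rho_pi_le_rho_alloc)
qed

theorem corollary3:
  fixes n m i :: nat and b :: "nat \<Rightarrow> real" and A :: "nat \<Rightarrow> nat set" and seq :: "nat \<Rightarrow> nat"
  assumes "\<forall>j\<in>{1..n}. 0 < b j"
    and "(\<Sum>j=1..n. b j) = 1"
    and "\<forall>j\<in>{1..n}. A j \<subseteq> {1..m}"
    and "\<forall>j\<in>{1..n}. \<forall>k\<in>{1..n}. j \<noteq> k \<longrightarrow> A j \<inter> A k = {}"
    and "(\<Union>j\<in>{1..n}. A j) = {1..m}"
    and "\<forall>r\<in>{1..m}. \<forall>j\<in>{1..n}. seq r = j \<longleftrightarrow> m + 1 - r \<in> A j"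
    and "i \<in> {1..n}"
  shows "rho_alloc (aps (b i) m) A i m = rho_pi (aps (b i) m) seq i m n
       \<and> rho_alloc (cs (b i) m) A i m = rho_pi (cs (b i) m) seq i m n
       \<and> ((\<forall>j\<in>{1..n}. b j = 1 / real n) \<longrightarrow>
            rho_alloc (mms n m) A i m = rho_pi (mms n m) seq i m n)"
proof -
  have "b i \<le> (\<Sum>j=1..n. b j)"
    by (rule member_le_sum) (use assms(1,7) in \<open>auto intro: less_imp_le\<close>)
  then have b_i: "0 < b i" "b i \<le> 1"
    using assms(1,2,7) by auto
  have seq: "seq ` {1..m} \<subseteq> {1..n}"
    using assms(5,6) by (rule picking_sequence_range)
  have A_i: "A i = (\<lambda>r. m + 1 - r) ` {r \<in> {1..m}. seq r = i}"
    using assms(3,6,7) by (intro bundle_eq_reversed_rounds) auto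
  have "rho_alloc (aps (b i) m) A i m = rho_pi (aps (b i) m) seq i m n"
    by (rule rho_alloc_eq_rho_pi[OF perm_invariant_aps _ seq]) (use aps_nonneg b_i A_i in auto)
  moreover have "rho_alloc (cs (b i) m) A i m = rho_pi (cs (b i) m) seq i m n"
    by (rule rho_alloc_eq_rho_pi[OF perm_invariant_cs _ seq]) (use cs_nonneg b_i A_i in auto)
  moreover have "rho_alloc (mms n m) A i m = rho_pi (mms n m) seq i m n"
    by (rule rho_alloc_eq_rho_pi[OF perm_invariant_mms _ seq]) (use mms_nonneg assms(7) A_i in auto)
  ultimately show ?thesis
    by blast
qed

end
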